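(* Let $K$ be a finitely generated ring and $I$ a two-sided ideal of $K$ such that the additive group of $K/I$ is finitely generated. Then $I$ is finitely generated as a ring.
   Context: Rings are associative and not necessarily unital; "finitely generated ring" means generated as a ring by finitely many elements. *)

theory Defs
  imports Main
begin

text \<open>Rings are associative, not necessarily unital: Isabelle's type class ring
  (semiring + abelian additive group, no unit). The ring K is the whole type.\<close>

inductive_set ring_gen :: "'a::ring set \<Rightarrow> 'a set" for S :: "'a set" where
  base: "x \<in> S \<Longrightarrow> x \<in> ring_gen S"
| zero: "0 \<in> ring_gen S"
| add: "x \<in> ring_gen S \<Longrightarrow> y \<in> ring_gen S \<Longrightarrow> x + y \<in> ring_gen S"
| neg: "x \<in> ring_gen S \<Longrightarrow> - x \<in> ring_gen S"
| mult: "x \<in> ring_gen S \<Longrightarrow> y \<in> ring_gen S \<Longrightarrow> x * y \<in> ring_gen S"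

inductive_set add_gen :: "'a::ab_group_add set \<Rightarrow> 'a set" for F :: "'a set" where
  base: "x \<in> F \<Longrightarrow> x \<in> add_gen F"
| zero: "0 \<in> add_gen F"
| add: "x \<in> add_gen F \<Longrightarrow> y \<in> add_gen F \<Longrightarrow> x + y \<in> add_gen F"
| neg: "x \<in> add_gen F \<Longrightarrow> - x \<in> add_gen F"

definition is_ideal :: "'a::ring set \<Rightarrow> bool" where
  "is_ideal I \<longleftrightarrow> 0 \<in> I \<and> (\<forall>x\<in>I. \<forall>y\<in>I. x + y \<in> I) \<and> (\<forall>x\<in>I. - x \<in> I)
     \<and> (\<forall>k x. x \<in> I \<longrightarrow> k * x \<in> I \<and> x * k \<in> I)"

definition fg_ring :: "'a::ring itself \<Rightarrow> bool" where
  "fg_ring _ \<longleftrightarrow> (\<exists>S::'a set. finite S \<and> ring_gen S = UNIV)"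

text \<open>The additive group of K/I is finitely generated: there is a finite F whose
  cosets generate K/I, i.e. every x is congruent mod I to an element of the
  additive subgroup generated by F.\<close>
definition fg_quotient_add :: "'a::ring set \<Rightarrow> bool" where
  "fg_quotient_add I \<longleftrightarrow> (\<exists>F. finite F \<and> (\<forall>x. \<exists>g\<in>add_gen F. x - g \<in> I))"

end

theory Submission
  imports Defs "HOL-Library.Set_Algebras"
begin

text \<open>Enlarge a finite generating set of the ring to a finite set \<open>F\<close> whose additive span
  \<open>G\<close> meets every coset of \<open>I\<close>. Each product \<open>f f'\<close> of elements of \<open>F\<close> splits as
  \<open>g + t\<close> with \<open>g \<in> G\<close> and \<open>t \<in> I\<close>; collect these finitely many \<open>t\<close> in \<open>T\<^sub>0\<close> and put
  \<open>T = T\<^sub>0 \<union> F T\<^sub>0 \<union> T\<^sub>0 F \<union> F T\<^sub>0 F\<close>. Re-splitting \<open>f f'\<close> shows that the subring \<open>L\<close>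
  generated by \<open>T\<close> is stable under multiplication by \<open>F\<close> on both sides, so \<open>G + L\<close> is
  a subring containing the generators, i.e. the whole ring. Since \<open>L \<subseteq> I\<close>, this gives
  \<open>I = (I \<inter> G) + L\<close>, and \<open>I \<inter> G\<close> is finitely generated as a subgroup of the finitely
  generated abelian group \<open>G\<close>.\<close>

primrec nsmul :: "nat \<Rightarrow> 'a::ab_group_add \<Rightarrow> 'a" where
  "nsmul 0 a = 0"
| "nsmul (Suc k) a = a + nsmul k a"

lemma nsmul_add: "nsmul (m + k) a = nsmul m a + nsmul k a"
  by (induction m) (auto simp: algebra_simps)

lemma nsmul_add_right: "nsmul k (x + y) = nsmul k x + nsmul k y"
  by (induction k) (auto simp: algebra_simps)

lemma nsmul_neg: "nsmul k (- x) = - nsmul k x"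
  by (induction k) (auto simp: algebra_simps)

lemma nsmul_diff_right: "nsmul k (x - y) = nsmul k x - nsmul k y"
  using nsmul_add_right[of k x "- y"] by (simp add: nsmul_neg)

lemma nsmul_mult: "nsmul (m * k) a = nsmul m (nsmul k a)"
  by (induction m) (auto simp: nsmul_add nsmul_add_right)

lemma nsmul_commute: "nsmul m (nsmul k a) = nsmul k (nsmul m a)"
  by (metis nsmul_mult mult.commute)

text \<open>Without a unit, integer multiples cannot be written as products with \<open>of_int\<close>; they are
  defined directly.\<close>

definition zsmul :: "int \<Rightarrow> 'a::ab_group_add \<Rightarrow> 'a" where
  "zsmul n a = nsmul (nat n) a - nsmul (nat (- n)) a"

lemma zsmul_of_nat_diff: "zsmul (int m - int k) a = nsmul m a - nsmul k a"
proof (cases "k \<le> m")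
  case True
  then have "nsmul m a = nsmul (m - k) a + nsmul k a" using nsmul_add[of "m - k" k a] by simp
  with True show ?thesis by (simp add: zsmul_def nat_diff_distrib')
next
  case False
  then have "nsmul k a = nsmul (k - m) a + nsmul m a" using nsmul_add[of "k - m" m a] by simp
  with False show ?thesis by (simp add: zsmul_def nat_diff_distrib')
qed

lemma zsmul_0 [simp]: "zsmul 0 a = 0"
  by (simp add: zsmul_def)

lemma zsmul_1 [simp]: "zsmul 1 a = a"
  by (simp add: zsmul_def)

lemma zsmul_add: "zsmul (n + m) a = zsmul n a + zsmul m a"
proof -
  have "n + m = int (nat n + nat m) - int (nat (- n) + nat (- m))"
    by simp
  then have "zsmul (n + m) a = nsmul (nat n + nat m) a - nsmul (nat (- n) + nat (- m)) a"
    by (metis zsmul_of_nat_diff)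
  then show ?thesis
    by (simp add: nsmul_add zsmul_def algebra_simps)
qed

lemma zsmul_minus: "zsmul (- n) a = - zsmul n a"
  by (simp add: zsmul_def)

lemma zsmul_diff: "zsmul (n - m) a = zsmul n a - zsmul m a"
  using zsmul_add[of n "- m" a] by (simp add: zsmul_minus)

lemma zsmul_add_right: "zsmul k (x + y) = zsmul k x + zsmul k y"
  by (simp add: zsmul_def nsmul_add_right algebra_simps)

lemma zsmul_mult: "zsmul (k * n) a = zsmul k (zsmul n a)"
proof -
  have "k * n = int (nat k * nat n + nat (- k) * nat (- n))
              - int (nat k * nat (- n) + nat (- k) * nat n)"
    by (cases "k \<ge> 0"; cases "n \<ge> 0") (auto simp: algebra_simps)
  then have "zsmul (k * n) a = nsmul (nat k * nat n + nat (- k) * nat (- n)) a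
                             - nsmul (nat k * nat (- n) + nat (- k) * nat n) a"
    by (metis zsmul_of_nat_diff)
  then show ?thesis
    by (simp add: nsmul_add nsmul_mult zsmul_def nsmul_diff_right algebra_simps nsmul_commute)
qed

definition add_subgroup :: "'a::ab_group_add set \<Rightarrow> bool" where
  "add_subgroup H \<longleftrightarrow> 0 \<in> H \<and> (\<forall>x\<in>H. \<forall>y\<in>H. x + y \<in> H) \<and> (\<forall>x\<in>H. - x \<in> H)"

lemma add_subgroupI:
  assumes "0 \<in> H" "\<And>x y. x \<in> H \<Longrightarrow> y \<in> H \<Longrightarrow> x + y \<in> H" "\<And>x. x \<in> H \<Longrightarrow> - x \<in> H"
  shows "add_subgroup H"
  using assms by (simp add: add_subgroup_def)

lemma add_subgroup_zero: "add_subgroup H \<Longrightarrow> 0 \<in> H"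
  and add_subgroup_add: "add_subgroup H \<Longrightarrow> x \<in> H \<Longrightarrow> y \<in> H \<Longrightarrow> x + y \<in> H"
  and add_subgroup_minus: "add_subgroup H \<Longrightarrow> x \<in> H \<Longrightarrow> - x \<in> H"
  by (simp_all add: add_subgroup_def)

lemma add_subgroup_diff: "add_subgroup H \<Longrightarrow> x \<in> H \<Longrightarrow> y \<in> H \<Longrightarrow> x - y \<in> H"
  by (metis add_subgroup_add add_subgroup_minus diff_conv_add_uminus)

lemma add_subgroup_zsmul:
  assumes "add_subgroup H" "x \<in> H"
  shows "zsmul k x \<in> H"
proof -
  have "nsmul n x \<in> H" for n
    using assms by (induction n) (simp_all add: add_subgroup_zero add_subgroup_add)
  then show ?thesis
    unfolding zsmul_def using assms(1) by (simp add: add_subgroup_diff)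
qed

lemma add_subgroup_Int: "add_subgroup H \<Longrightarrow> add_subgroup K \<Longrightarrow> add_subgroup (H \<inter> K)"
  by (simp add: add_subgroup_def)

lemma add_subgroup_set_plus:
  fixes H K :: "'a::ab_group_add set"
  assumes "add_subgroup H" "add_subgroup K"
  shows "add_subgroup (H + K)"
proof (rule add_subgroupI)
  show "0 \<in> H + K"
    using set_plus_intro[OF add_subgroup_zero add_subgroup_zero] assms by fastforce
next
  fix x y assume "x \<in> H + K" "y \<in> H + K"
  then obtain h k h' k' where "x = h + k" "y = h' + k'" "h \<in> H" "k \<in> K" "h' \<in> H" "k' \<in> K"
    by (metis set_plus_elim)
  then have "x + y = (h + h') + (k + k')" "h + h' \<in> H" "k + k' \<in> K"
    using assms by (simp_all add: algebra_simps add_subgroup_add)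
  then show "x + y \<in> H + K" by auto
next
  fix x assume "x \<in> H + K"
  then obtain h k where "x = h + k" "h \<in> H" "k \<in> K"
    by (rule set_plus_elim)
  then have "- x = - h + - k" "- h \<in> H" "- k \<in> K"
    using assms by (simp_all add: add_subgroup_minus)
  then show "- x \<in> H + K" by (metis set_plus_intro)
qed

lemma add_subgroup_add_gen: "add_subgroup (add_gen F)"
  by (auto simp: add_subgroup_def intro: add_gen.intros)

lemma add_gen_least:
  assumes "add_subgroup H" "F \<subseteq> H"
  shows "add_gen F \<subseteq> H"
proof
  fix x assume "x \<in> add_gen F"
  then show "x \<in> H"
    by (induction rule: add_gen.induct) (use assms in \<open>auto simp: add_subgroup_def\<close>)
qed

lemma add_gen_mono: "F \<subseteq> G \<Longrightarrow> add_gen F \<subseteq> add_gen G"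
  by (rule add_gen_least[OF add_subgroup_add_gen]) (auto intro: add_gen.base)

lemma add_gen_insert_elim:
  assumes "x \<in> add_gen (insert a F)"
  obtains n y where "y \<in> add_gen F" "x = zsmul n a + y"
proof -
  from assms have "\<exists>n. \<exists>y\<in>add_gen F. x = zsmul n a + y"
  proof (induction rule: add_gen.induct)
    case (base x)
    then show ?case
      by (metis add.right_neutral add_0 add_gen.base add_gen.zero insert_iff zsmul_0 zsmul_1)
  next
    case zero
    then show ?case by (metis add_gen.zero add.right_neutral zsmul_0)
  next
    case (add x y)
    then obtain n y1 m y2 where "y1 \<in> add_gen F" "x = zsmul n a + y1" "y2 \<in> add_gen F" "y = zsmul m a + y2"
      by blast
    then show ?case
      by (intro exI[of _ "n + m"] bexI[of _ "y1 + y2"]) (auto simp: zsmul_add algebra_simps intro: add_gen.add)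
  next
    case (neg x)
    then obtain n y where "y \<in> add_gen F" "x = zsmul n a + y"
      by blast
    then show ?case
      by (intro exI[of _ "- n"] bexI[of _ "- y"]) (auto simp: zsmul_minus intro: add_gen.neg)
  qed
  then show ?thesis using that by blast
qed

lemma int_ideal_principal:
  fixes N :: "int set"
  assumes "N \<noteq> {}"
    and diff: "\<And>m n. m \<in> N \<Longrightarrow> n \<in> N \<Longrightarrow> m - n \<in> N"
    and mult: "\<And>q n. n \<in> N \<Longrightarrow> q * n \<in> N"
  shows "\<exists>d\<in>N. \<forall>n\<in>N. d dvd n"
proof (cases "N \<subseteq> {0}")
  case True
  with assms(1) show ?thesis by auto
next
  case False
  then obtain n where "n \<in> N" "n \<noteq> 0" by auto
  then have "\<bar>n\<bar> \<in> N"
    using mult[of n "sgn n"] by (simp add: abs_sgn mult.commute)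
  with \<open>n \<noteq> 0\<close> have "int (nat \<bar>n\<bar>) \<in> N \<and> 0 < nat \<bar>n\<bar>"
    by simp
  then have ex: "\<exists>k. int k \<in> N \<and> 0 < k" ..
  define d where "d = int (LEAST k. int k \<in> N \<and> 0 < k)"
  have d: "d \<in> N" "0 < d"
    using LeastI_ex[OF ex] by (simp_all add: d_def)
  have d_least: "d \<le> int k" if "int k \<in> N" "0 < k" for k
    using Least_le[of "\<lambda>k. int k \<in> N \<and> 0 < k" k] that unfolding d_def by simp
  have "d dvd m" if "m \<in> N" for m
  proof -
    have "m mod d = m - (m div d) * d" by (simp add: minus_div_mult_eq_mod)
    then have mod_N: "m mod d \<in> N" using diff mult that d(1) by simp
    have "m mod d = 0"
    proof (rule ccontr)
      assume "m mod d \<noteq> 0"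
      with pos_mod_sign[OF d(2), of m] have "0 < m mod d" by linarith
      then have "d \<le> m mod d"
        using d_least[of "nat (m mod d)"] mod_N by simp
      with pos_mod_bound[OF d(2), of m] show False by simp
    qed
    then show ?thesis by (simp add: dvd_eq_mod_eq_0)
  qed
  with d(1) show ?thesis by blast
qed

lemma add_subgroup_coefficient_generator:
  assumes H: "add_subgroup H"
  obtains d y0 where "y0 \<in> add_gen F" "zsmul d a + y0 \<in> H"
    and "\<forall>n. \<forall>y\<in>add_gen F. zsmul n a + y \<in> H \<longrightarrow> d dvd n"
proof -
  define N where "N = {n. \<exists>y\<in>add_gen F. zsmul n a + y \<in> H}"
  have "0 \<in> N"
    using add_gen.zero[of F] add_subgroup_zero[OF H] unfolding N_def by force
  then have "N \<noteq> {}" by blast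
  moreover have "m - n \<in> N" if mn: "m \<in> N" "n \<in> N" for m n
  proof -
    obtain y y' where y: "y \<in> add_gen F" "zsmul m a + y \<in> H"
      and y': "y' \<in> add_gen F" "zsmul n a + y' \<in> H"
      using mn unfolding N_def by blast
    have "zsmul (m - n) a + (y - y') = (zsmul m a + y) - (zsmul n a + y')"
      by (simp add: zsmul_diff algebra_simps)
    also have "\<dots> \<in> H"
      using add_subgroup_diff[OF H y(2) y'(2)] .
    finally show ?thesis
      using add_subgroup_diff[OF add_subgroup_add_gen y(1) y'(1)] unfolding N_def by blast
  qed
  moreover have "q * n \<in> N" if n: "n \<in> N" for q n
  proof -
    obtain y where y: "y \<in> add_gen F" "zsmul n a + y \<in> H"
      using n unfolding N_def by blast
    have "zsmul (q * n) a + zsmul q y = zsmul q (zsmul n a + y)"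
      by (simp add: zsmul_mult zsmul_add_right)
    also have "\<dots> \<in> H"
      using add_subgroup_zsmul[OF H y(2)] .
    finally show ?thesis
      using add_subgroup_zsmul[OF add_subgroup_add_gen y(1)] unfolding N_def by blast
  qed
  ultimately obtain d where "d \<in> N" and d_dvd: "\<And>n. n \<in> N \<Longrightarrow> d dvd n"
    using int_ideal_principal[of N] by blast
  then obtain y0 where "y0 \<in> add_gen F" "zsmul d a + y0 \<in> H"
    unfolding N_def by blast
  moreover have "\<forall>n. \<forall>y\<in>add_gen F. zsmul n a + y \<in> H \<longrightarrow> d dvd n"
    using d_dvd unfolding N_def by blast
  ultimately show ?thesis
    by (rule that)
qed

lemma add_subgroup_insert_generator:
  assumes H: "add_subgroup H" and "H \<subseteq> add_gen (insert a F)"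
  obtains w where "w \<in> H" "H \<subseteq> add_gen (insert w (H \<inter> add_gen F))"
proof -
  obtain d y0 where y0: "y0 \<in> add_gen F" "zsmul d a + y0 \<in> H"
    and d_dvd: "\<forall>n. \<forall>y\<in>add_gen F. zsmul n a + y \<in> H \<longrightarrow> d dvd n"
    by (rule add_subgroup_coefficient_generator[OF H, where F = F and a = a])
  define w where "w = zsmul d a + y0"
  let ?G = "add_gen (insert w (H \<inter> add_gen F))"
  have "x \<in> ?G" if "x \<in> H" for x
  proof -
    from that assms(2) have "x \<in> add_gen (insert a F)" by blast
    then obtain n y where y: "y \<in> add_gen F" "x = zsmul n a + y"
      by (rule add_gen_insert_elim)
    have "d dvd n"
      using d_dvd y(1) that unfolding y(2) by blast
    then obtain q where "n = d * q" ..
    then have x_eq: "x = zsmul q w + (y - zsmul q y0)"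
      unfolding y(2) w_def by (simp add: mult.commute[of d q] zsmul_mult zsmul_add_right)
    have qw: "zsmul q w \<in> H" "zsmul q w \<in> ?G"
      using add_subgroup_zsmul[OF H y0(2)[folded w_def]]
        add_subgroup_zsmul[OF add_subgroup_add_gen add_gen.base[of w]] by simp_all
    have "y - zsmul q y0 = x - zsmul q w"
      unfolding x_eq by simp
    then have "y - zsmul q y0 \<in> H"
      using add_subgroup_diff[OF H that qw(1)] by simp
    moreover have "y - zsmul q y0 \<in> add_gen F"
      using add_subgroup_diff[OF add_subgroup_add_gen y(1)]
        add_subgroup_zsmul[OF add_subgroup_add_gen y0(1)] by blast
    ultimately have "y - zsmul q y0 \<in> ?G"
      by (blast intro: add_gen.base)
    with qw(2) show "x \<in> ?G"
      unfolding x_eq by (rule add_gen.add)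
  qed
  then have "H \<subseteq> ?G" ..
  with y0(2) show ?thesis
    unfolding w_def by (rule that)
qed

lemma add_subgroup_of_finitely_generated:
  fixes F :: "'a::ab_group_add set"
  assumes "finite F" "add_subgroup H" "H \<subseteq> add_gen F"
  shows "\<exists>E. finite E \<and> add_gen E = H"
  using assms
proof (induction F arbitrary: H rule: finite_induct)
  case empty
  have "add_gen {} \<subseteq> H"
    using empty.prems(1) by (simp add: add_gen_least)
  with empty.prems(2) show ?case by blast
next
  case (insert a F)
  have "add_subgroup (H \<inter> add_gen F)"
    by (simp add: add_subgroup_Int add_subgroup_add_gen insert.prems(1))
  then obtain E where E: "finite E" "add_gen E = H \<inter> add_gen F"
    using insert.IH by blast
  obtain w where w: "w \<in> H" "H \<subseteq> add_gen (insert w (H \<inter> add_gen F))"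
    using add_subgroup_insert_generator[OF insert.prems] .
  have "add_gen (insert w (H \<inter> add_gen F)) \<subseteq> add_gen (insert w E)"
    unfolding E(2)[symmetric]
    using add_gen_mono[of E "insert w E"] add_gen.base[of w "insert w E"]
    by (intro add_gen_least[OF add_subgroup_add_gen]) blast
  moreover have "add_gen (insert w E) \<subseteq> H"
    using w(1) E(2) add_gen.base[of _ E] by (intro add_gen_least[OF insert.prems(1)]) blast
  ultimately have "add_gen (insert w E) = H"
    using w(2) by blast
  with E(1) show ?case by blast
qed

definition is_subring :: "'a::ring set \<Rightarrow> bool" where
  "is_subring A \<longleftrightarrow> add_subgroup A \<and> (\<forall>x\<in>A. \<forall>y\<in>A. x * y \<in> A)"

lemma is_ideal_imp_subring: "is_ideal I \<Longrightarrow> is_subring I"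
  by (simp add: is_ideal_def is_subring_def add_subgroup_def)

lemma is_subring_ring_gen: "is_subring (ring_gen S)"
  by (auto simp: is_subring_def add_subgroup_def intro: ring_gen.intros)

lemma add_subgroup_ring_gen: "add_subgroup (ring_gen S)"
  using is_subring_ring_gen[of S] by (simp add: is_subring_def)

lemma ring_gen_least:
  assumes "is_subring A" "S \<subseteq> A"
  shows "ring_gen S \<subseteq> A"
proof
  fix x assume "x \<in> ring_gen S"
  then show "x \<in> A"
    by (induction rule: ring_gen.induct) (use assms in \<open>auto simp: is_subring_def add_subgroup_def\<close>)
qed

lemma ring_gen_mono: "S \<subseteq> T \<Longrightarrow> ring_gen S \<subseteq> ring_gen T"
  by (rule ring_gen_least[OF is_subring_ring_gen]) (auto intro: ring_gen.base)

lemma add_gen_subset_ring_gen: "add_gen S \<subseteq> ring_gen S"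
  by (rule add_gen_least) (use is_subring_ring_gen in \<open>auto simp: is_subring_def intro: ring_gen.base\<close>)

lemma ring_gen_mult_left:
  assumes "\<And>t. t \<in> T \<Longrightarrow> a * t \<in> ring_gen T" "x \<in> ring_gen T"
  shows "a * x \<in> ring_gen T"
  using assms(2)
proof (induction rule: ring_gen.induct)
  case (mult x y)
  then show ?case by (metis mult.assoc ring_gen.mult)
qed (auto simp: assms(1) distrib_left intro: ring_gen.intros)

lemma ring_gen_mult_right:
  assumes "\<And>t. t \<in> T \<Longrightarrow> t * a \<in> ring_gen T" "x \<in> ring_gen T"
  shows "x * a \<in> ring_gen T"
  using assms(2)
proof (induction rule: ring_gen.induct)
  case (mult x y)
  then show ?case by (metis mult.assoc ring_gen.mult)
qed (auto simp: assms(1) distrib_right intro: ring_gen.intros)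

lemma add_gen_mult_left:
  fixes x :: "'a::ring"
  assumes "add_subgroup H" "\<And>f. f \<in> F \<Longrightarrow> f * x \<in> H" "g \<in> add_gen F"
  shows "g * x \<in> H"
proof -
  have "add_subgroup {g. g * x \<in> H}"
    using assms(1) by (simp add: add_subgroup_def distrib_right)
  then show ?thesis
    using add_gen_least[of "{g. g * x \<in> H}" F] assms(2,3) by blast
qed

lemma add_gen_mult_right:
  fixes x :: "'a::ring"
  assumes "add_subgroup H" "\<And>f. f \<in> F \<Longrightarrow> x * f \<in> H" "g \<in> add_gen F"
  shows "x * g \<in> H"
proof -
  have "add_subgroup {g. x * g \<in> H}"
    using assms(1) by (simp add: add_subgroup_def distrib_left)
  then show ?thesis
    using add_gen_least[of "{g. x * g \<in> H}" F] assms(2,3) by blast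
qed

definition two_sided_gens :: "'a::ring set \<Rightarrow> 'a set \<Rightarrow> 'a set" where
  "two_sided_gens F T0 = T0 \<union> F * T0 \<union> T0 * F \<union> F * T0 * F"

lemma finite_two_sided_gens: "finite F \<Longrightarrow> finite T0 \<Longrightarrow> finite (two_sided_gens F T0)"
  by (simp add: two_sided_gens_def finite_set_times)

lemma two_sided_gens_subset_ideal:
  assumes "is_ideal I" "T0 \<subseteq> I"
  shows "two_sided_gens F T0 \<subseteq> I"
  using assms unfolding two_sided_gens_def is_ideal_def set_times_def by auto

lemma add_gen_plus_subring_mult_left:
  assumes "is_subring L" "p \<in> add_gen F + L" "s \<in> L" "\<And>f. f \<in> F \<Longrightarrow> f * s \<in> L"
  shows "p * s \<in> L"
proof -
  obtain g l where gl: "p = g + l" "g \<in> add_gen F" "l \<in> L"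
    using assms(2) by (rule set_plus_elim)
  have "g * s \<in> L"
    using assms(1) add_gen_mult_left[OF _ assms(4) gl(2)] by (simp add: is_subring_def)
  moreover have "l * s \<in> L"
    using assms(1,3) gl(3) by (simp add: is_subring_def)
  ultimately show ?thesis
    using assms(1) unfolding gl(1) distrib_right by (simp add: is_subring_def add_subgroup_def)
qed

lemma add_gen_plus_subring_mult_right:
  assumes "is_subring L" "p \<in> add_gen F + L" "s \<in> L" "\<And>f. f \<in> F \<Longrightarrow> s * f \<in> L"
  shows "s * p \<in> L"
proof -
  obtain g l where gl: "p = g + l" "g \<in> add_gen F" "l \<in> L"
    using assms(2) by (rule set_plus_elim)
  have "s * g \<in> L"
    using assms(1) add_gen_mult_right[OF _ assms(4) gl(2)] by (simp add: is_subring_def)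
  moreover have "s * l \<in> L"
    using assms(1,3) gl(3) by (simp add: is_subring_def)
  ultimately show ?thesis
    using assms(1) unfolding gl(1) distrib_left by (simp add: is_subring_def add_subgroup_def)
qed

lemma two_sided_gens_split:
  assumes "F * F \<subseteq> add_gen F + ring_gen T0"
  shows "F * F \<subseteq> add_gen F + ring_gen (two_sided_gens F T0)"
proof -
  have "ring_gen T0 \<subseteq> ring_gen (two_sided_gens F T0)"
    by (rule ring_gen_mono) (auto simp: two_sided_gens_def)
  then have "add_gen F + ring_gen T0 \<subseteq> add_gen F + ring_gen (two_sided_gens F T0)"
    by (rule set_plus_mono2[OF order_refl])
  with assms show ?thesis by (rule order_trans)
qed

lemma ring_gen_two_sided_gens_mult_left:
  assumes split: "F * F \<subseteq> add_gen F + ring_gen T0"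
    and "f \<in> F" "x \<in> ring_gen (two_sided_gens F T0)"
  shows "f * x \<in> ring_gen (two_sided_gens F T0)"
proof (rule ring_gen_mult_left[OF _ assms(3)])
  let ?T = "two_sided_gens F T0"
  have T: "T0 \<subseteq> ?T" "F * T0 \<subseteq> ?T" "T0 * F \<subseteq> ?T" "F * T0 * F \<subseteq> ?T"
    by (auto simp: two_sided_gens_def)
  have resplit: "f * f' * u \<in> ring_gen ?T"
    if "f' \<in> F" "u \<in> ?T" "\<And>f1. f1 \<in> F \<Longrightarrow> f1 * u \<in> ?T" for f' u
  proof (rule add_gen_plus_subring_mult_left[OF is_subring_ring_gen])
    show "f * f' \<in> add_gen F + ring_gen ?T"
      using two_sided_gens_split[OF split] set_times_intro[OF \<open>f \<in> F\<close> that(1)] by blast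
  qed (use that in \<open>auto intro: ring_gen.base\<close>)
  fix t assume "t \<in> ?T"
  then consider "t \<in> T0" | "t \<in> F * T0" | "t \<in> T0 * F" | "t \<in> F * T0 * F"
    unfolding two_sided_gens_def by blast
  then show "f * t \<in> ring_gen ?T"
  proof cases
    case 1
    with set_times_intro[OF \<open>f \<in> F\<close>] T(2) show ?thesis by (blast intro: ring_gen.base)
  next
    case 2
    then obtain f' s where t: "t = f' * s" "f' \<in> F" "s \<in> T0"
      by (rule set_times_elim)
    have "f * f' * s \<in> ring_gen ?T"
      using t(2,3) T(1,2) by (intro resplit) auto
    then show ?thesis by (simp add: t(1) mult.assoc)
  next
    case 3
    then obtain s f' where "t = s * f'" "s \<in> T0" "f' \<in> F"
      by (rule set_times_elim)
    then have "f * t \<in> F * T0 * F"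
      using set_times_intro[OF set_times_intro[OF \<open>f \<in> F\<close>]] by (simp add: mult.assoc)
    with T(4) show ?thesis by (blast intro: ring_gen.base)
  next
    case 4
    then obtain f' s f'' where t: "t = f' * s * f''" "f' \<in> F" "s \<in> T0" "f'' \<in> F"
      by (metis set_times_elim)
    have "f * f' * (s * f'') \<in> ring_gen ?T"
      using t(2-4) T(3,4) by (intro resplit) (auto simp: mult.assoc[symmetric])
    then show ?thesis by (simp add: t(1) mult.assoc)
  qed
qed

lemma ring_gen_two_sided_gens_mult_right:
  assumes split: "F * F \<subseteq> add_gen F + ring_gen T0"
    and "f \<in> F" "x \<in> ring_gen (two_sided_gens F T0)"
  shows "x * f \<in> ring_gen (two_sided_gens F T0)"
proof (rule ring_gen_mult_right[OF _ assms(3)])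
  let ?T = "two_sided_gens F T0"
  have T: "T0 \<subseteq> ?T" "F * T0 \<subseteq> ?T" "T0 * F \<subseteq> ?T" "F * T0 * F \<subseteq> ?T"
    by (auto simp: two_sided_gens_def)
  have resplit: "u * (f' * f) \<in> ring_gen ?T"
    if "f' \<in> F" "u \<in> ?T" "\<And>f1. f1 \<in> F \<Longrightarrow> u * f1 \<in> ?T" for f' u
  proof (rule add_gen_plus_subring_mult_right[OF is_subring_ring_gen])
    show "f' * f \<in> add_gen F + ring_gen ?T"
      using two_sided_gens_split[OF split] set_times_intro[OF that(1) \<open>f \<in> F\<close>] by blast
  qed (use that in \<open>auto intro: ring_gen.base\<close>)
  fix t assume "t \<in> ?T"
  then consider "t \<in> T0" | "t \<in> F * T0" | "t \<in> T0 * F" | "t \<in> F * T0 * F"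
    unfolding two_sided_gens_def by blast
  then show "t * f \<in> ring_gen ?T"
  proof cases
    case 1
    with set_times_intro[OF _ \<open>f \<in> F\<close>] T(3) show ?thesis by (blast intro: ring_gen.base)
  next
    case 2
    with set_times_intro[OF _ \<open>f \<in> F\<close>] T(4) show ?thesis by (blast intro: ring_gen.base)
  next
    case 3
    then obtain s f' where t: "t = s * f'" "s \<in> T0" "f' \<in> F"
      by (rule set_times_elim)
    have "s * (f' * f) \<in> ring_gen ?T"
      using t(2,3) T(1,3) by (intro resplit) auto
    then show ?thesis by (simp add: t(1) mult.assoc)
  next
    case 4
    then obtain u f' where t: "t = u * f'" "u \<in> F * T0" "f' \<in> F"
      by (rule set_times_elim)
    have "u * (f' * f) \<in> ring_gen ?T"
      using t(2,3) T(2,4) by (intro resplit) auto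
    then show ?thesis by (simp add: t(1) mult.assoc)
  qed
qed

lemma is_subring_add_gen_plus_ring_gen:
  assumes split: "F * F \<subseteq> add_gen F + ring_gen T0"
  shows "is_subring (add_gen F + ring_gen (two_sided_gens F T0))"
proof -
  let ?L = "ring_gen (two_sided_gens F T0)"
  let ?A = "add_gen F + ?L"
  have A_subgroup: "add_subgroup ?A"
    by (simp add: add_subgroup_set_plus add_subgroup_add_gen add_subgroup_ring_gen)
  have L_A: "?L \<subseteq> ?A"
    using set_zero_plus2[OF add_gen.zero] .
  have FF_A: "F * F \<subseteq> ?A"
    using split by (rule two_sided_gens_split)
  have GG: "g * g' \<in> ?A" if "g \<in> add_gen F" "g' \<in> add_gen F" for g g'
  proof (rule add_gen_mult_left[OF A_subgroup _ that(1)])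
    fix f assume "f \<in> F"
    show "f * g' \<in> ?A"
      by (rule add_gen_mult_right[OF A_subgroup _ that(2)])
        (use FF_A \<open>f \<in> F\<close> in \<open>blast intro: set_times_intro\<close>)
  qed
  have GL: "g * l \<in> ?L" "l * g \<in> ?L" if "g \<in> add_gen F" "l \<in> ?L" for g l
    using add_gen_mult_left[OF add_subgroup_ring_gen _ that(1)]
      add_gen_mult_right[OF add_subgroup_ring_gen _ that(1)]
      ring_gen_two_sided_gens_mult_left[OF split _ that(2)]
      ring_gen_two_sided_gens_mult_right[OF split _ that(2)]
    by blast+
  have "x * y \<in> ?A" if xy: "x \<in> ?A" "y \<in> ?A" for x y
  proof -
    obtain g l g' l' where gl: "x = g + l" "g \<in> add_gen F" "l \<in> ?L"
      and gl': "y = g' + l'" "g' \<in> add_gen F" "l' \<in> ?L"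
      using xy by (meson set_plus_elim)
    have "x * y = g * g' + (g * l' + l * g' + l * l')"
      unfolding gl(1) gl'(1) by (simp add: algebra_simps)
    moreover have "g * l' + l * g' + l * l' \<in> ?L"
      using GL(1)[OF gl(2) gl'(3)] GL(2)[OF gl'(2) gl(3)] ring_gen.mult[OF gl(3) gl'(3)]
      by (intro ring_gen.add)
    ultimately show ?thesis
      using add_subgroup_add[OF A_subgroup GG[OF gl(2) gl'(2)]] L_A by auto
  qed
  with A_subgroup show ?thesis
    by (simp add: is_subring_def)
qed

lemma ideal_finitely_generated_if_complemented:
  assumes "is_ideal I" "finite F" "finite T" "T \<subseteq> I"
    and "add_gen F + ring_gen T = UNIV"
  shows "\<exists>T'. finite T' \<and> T' \<subseteq> I \<and> ring_gen T' = I"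
proof -
  have I_subring: "is_subring I"
    using assms(1) by (rule is_ideal_imp_subring)
  then have "add_subgroup (I \<inter> add_gen F)"
    by (simp add: is_subring_def add_subgroup_Int add_subgroup_add_gen)
  then obtain E where E: "finite E" "add_gen E = I \<inter> add_gen F"
    using add_subgroup_of_finitely_generated[OF assms(2)] by blast
  have "E \<subseteq> I"
    using E(2) add_gen.base by blast
  with assms(4) have T'_I: "T \<union> E \<subseteq> I" by blast
  have "I \<subseteq> ring_gen (T \<union> E)"
  proof
    fix x assume "x \<in> I"
    have "x \<in> add_gen F + ring_gen T"
      using assms(5) by simp
    then obtain g l where gl: "x = g + l" "g \<in> add_gen F" "l \<in> ring_gen T"
      by (rule set_plus_elim)
    have "l \<in> I"
      using gl(3) ring_gen_least[OF I_subring assms(4)] by blast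
    then have "x - l \<in> I"
      using I_subring \<open>x \<in> I\<close> by (simp add: is_subring_def add_subgroup_diff)
    then have "g \<in> I"
      using gl(1) by simp
    with gl(2) E(2) have "g \<in> ring_gen E"
      using add_gen_subset_ring_gen by blast
    then show "x \<in> ring_gen (T \<union> E)"
      using gl(1,3) ring_gen_mono[of E "T \<union> E"] ring_gen_mono[of T "T \<union> E"]
      by (blast intro: ring_gen.add)
  qed
  with ring_gen_least[OF I_subring T'_I] have "ring_gen (T \<union> E) = I" by blast
  with T'_I assms(3) E(1) show ?thesis by blast
qed

lemma finite_ideal_part_of_products:
  assumes "finite F" "\<forall>x. \<exists>g\<in>add_gen F. x - g \<in> I"
  obtains T0 where "finite T0" "T0 \<subseteq> I" "F * F \<subseteq> add_gen F + ring_gen T0"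
proof -
  obtain r where r: "\<And>x. r x \<in> add_gen F" "\<And>x. x - r x \<in> I"
    using assms(2) by metis
  define T0 where "T0 = (\<lambda>x. x - r x) ` (F * F)"
  have "F * F \<subseteq> add_gen F + ring_gen T0"
  proof
    fix x assume "x \<in> F * F"
    then have "x - r x \<in> ring_gen T0"
      unfolding T0_def by (blast intro: ring_gen.base)
    then have "r x + (x - r x) \<in> add_gen F + ring_gen T0"
      by (rule set_plus_intro[OF r(1)])
    then show "x \<in> add_gen F + ring_gen T0"
      by simp
  qed
  moreover have "finite T0"
    using assms(1) by (simp add: T0_def finite_set_times)
  moreover have "T0 \<subseteq> I"
    using r(2) by (auto simp: T0_def)
  ultimately show ?thesis
    using that by blast
qed

lemma add_gen_plus_ring_gen_two_sided_gens_eq_UNIV: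
  assumes "ring_gen S = UNIV" "S \<subseteq> F" "F * F \<subseteq> add_gen F + ring_gen T0"
  shows "add_gen F + ring_gen (two_sided_gens F T0) = UNIV"
proof -
  have "S \<subseteq> add_gen F + ring_gen (two_sided_gens F T0)"
  proof
    fix s assume "s \<in> S"
    with assms(2) have "s + 0 \<in> add_gen F + ring_gen (two_sided_gens F T0)"
      by (blast intro: set_plus_intro add_gen.base ring_gen.zero)
    then show "s \<in> add_gen F + ring_gen (two_sided_gens F T0)"
      by simp
  qed
  with ring_gen_least[OF is_subring_add_gen_plus_ring_gen[OF assms(3)]] assms(1) show ?thesis
    by auto
qed

theorem proposition2:
  fixes I :: "'a::ring set"
  assumes "fg_ring TYPE('a)"
    and "is_ideal I"
    and "fg_quotient_add I"
  shows "\<exists>T. finite T \<and> T \<subseteq> I \<and> ring_gen T = I"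
proof -
  obtain S :: "'a set" where S: "finite S" "ring_gen S = UNIV"
    using assms(1) unfolding fg_ring_def by blast
  obtain F0 where F0: "finite F0" "\<forall>x. \<exists>g\<in>add_gen F0. x - g \<in> I"
    using assms(3) unfolding fg_quotient_add_def by blast
  define F where "F = F0 \<union> S"
  have F: "finite F" "S \<subseteq> F" "\<forall>x. \<exists>g\<in>add_gen F. x - g \<in> I"
    using F0 S(1) add_gen_mono[of F0 F] by (auto simp: F_def)
  then obtain T0 where T0: "finite T0" "T0 \<subseteq> I" "F * F \<subseteq> add_gen F + ring_gen T0"
    by (meson finite_ideal_part_of_products)
  show ?thesis
    using assms(2) F(1) finite_two_sided_gens[OF F(1) T0(1)]
      two_sided_gens_subset_ideal[OF assms(2) T0(2)]
      add_gen_plus_ring_gen_two_sided_gens_eq_UNIV[OF S(2) F(2) T0(3)]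
    by (rule ideal_finitely_generated_if_complemented)
qed

end
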